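(* Let $G$ be a claw-free graph, let $L$ be an induced path or a hole of $G$, and let $\mathbf{j}\notin L$ be a vertex such that $\Gamma_L(\mathbf{j})$ contains three vertices $\mathbf{k}_0,\mathbf{k}_1,\mathbf{k}_2$ with $\mathbf{k}_0\mathbf{k}_1$ and $\mathbf{k}_1\mathbf{k}_2$ edges of $L$. If $\mathbf{j}$ has an additional neighbour $\mathbf{u}\in L\setminus\{\mathbf{k}_0,\mathbf{k}_1,\mathbf{k}_2\}$, then $\mathbf{u}$ is adjacent to at least one of $\mathbf{k}_0$ or $\mathbf{k}_2$.
   Context: A hole is an induced cycle of length at least 4; an induced path is a vertex set whose induced edges are exactly those between consecutive vertices. Claw-free: no induced $K_{1,3}$. $\Gamma_L(\mathbf{j})$ is the set of neighbours of $\mathbf{j}$ in $L$. *)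

theory Defs
  imports Main
begin

definition simple_graph :: "'a set \<Rightarrow> ('a \<Rightarrow> 'a \<Rightarrow> bool) \<Rightarrow> bool" where
  "simple_graph V E \<longleftrightarrow> (\<forall>x y. E x y \<longrightarrow> x \<in> V \<and> y \<in> V \<and> E y x \<and> x \<noteq> y)"

definition claw_free :: "'a set \<Rightarrow> ('a \<Rightarrow> 'a \<Rightarrow> bool) \<Rightarrow> bool" where
  "claw_free V E \<longleftrightarrow> \<not> (\<exists>c\<in>V. \<exists>a\<in>V. \<exists>b\<in>V. \<exists>d\<in>V.
      distinct [c, a, b, d] \<and> E c a \<and> E c b \<and> E c d \<and>
      \<not> E a b \<and> \<not> E a d \<and> \<not> E b d)"

definition induced_path :: "'a set \<Rightarrow> ('a \<Rightarrow> 'a \<Rightarrow> bool) \<Rightarrow> 'a list \<Rightarrow> bool" where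
  "induced_path V E xs \<longleftrightarrow> xs \<noteq> [] \<and> distinct xs \<and> set xs \<subseteq> V \<and>
     (\<forall>i<length xs. \<forall>j<length xs. E (xs ! i) (xs ! j) \<longleftrightarrow> (Suc i = j \<or> Suc j = i))"

definition hole :: "'a set \<Rightarrow> ('a \<Rightarrow> 'a \<Rightarrow> bool) \<Rightarrow> 'a list \<Rightarrow> bool" where
  "hole V E xs \<longleftrightarrow> length xs \<ge> 4 \<and> distinct xs \<and> set xs \<subseteq> V \<and>
     (\<forall>i<length xs. \<forall>j<length xs. E (xs ! i) (xs ! j) \<longleftrightarrow>
        (Suc i mod length xs = j \<or> Suc j mod length xs = i))"

definition path_edge :: "'a list \<Rightarrow> 'a \<Rightarrow> 'a \<Rightarrow> bool" where
  "path_edge xs a b \<longleftrightarrow> (\<exists>i. Suc i < length xs \<and>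
     ((a = xs ! i \<and> b = xs ! Suc i) \<or> (b = xs ! i \<and> a = xs ! Suc i)))"

definition cycle_edge :: "'a list \<Rightarrow> 'a \<Rightarrow> 'a \<Rightarrow> bool" where
  "cycle_edge xs a b \<longleftrightarrow> (\<exists>i<length xs.
     ((a = xs ! i \<and> b = xs ! (Suc i mod length xs)) \<or>
      (b = xs ! i \<and> a = xs ! (Suc i mod length xs))))"

end

theory Submission
  imports Defs
begin

text \<open>In an induced path or a hole, the ends k0, k2 of two consecutive edges are non-adjacent:
  their positions differ by two, which is not a (cyclic) neighbour position because a hole has
  at least four vertices. So if u were adjacent to neither k0 nor k2, the vertex j together with
  k0, k2, u would induce a claw.\<close>

lemma claw_free_common_neighbours_adjacent:
  assumes "simple_graph V E" and "claw_free V E" and "c \<in> V"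
    and "E c a" and "E c b" and "E c d" and "distinct [a, b, d]"
  shows "E a b \<or> E a d \<or> E b d"
proof -
  have "c \<noteq> a" "c \<noteq> b" "c \<noteq> d" "a \<in> V" "b \<in> V" "d \<in> V"
    using assms(1,4-6) unfolding simple_graph_def by blast+
  then show ?thesis using assms(2-7) unfolding claw_free_def by auto
qed

lemma path_edge_in_set: "path_edge L x y \<Longrightarrow> x \<in> set L \<and> y \<in> set L"
  unfolding path_edge_def by (auto simp: Suc_lessD)

lemma cycle_edge_in_set: "cycle_edge L x y \<Longrightarrow> x \<in> set L \<and> y \<in> set L"
  unfolding cycle_edge_def by (auto intro!: nth_mem mod_less_divisor)

lemma path_edge_nth_iff:
  assumes "distinct L" and "a < length L" and "b < length L"
  shows "path_edge L (L ! a) (L ! b) \<longleftrightarrow> Suc a = b \<or> Suc b = a"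
  using assms unfolding path_edge_def by (auto simp: nth_eq_iff_index_eq Suc_lessD)

lemma cycle_edge_nth_iff:
  assumes "distinct L" and "a < length L" and "b < length L"
  shows "cycle_edge L (L ! a) (L ! b) \<longleftrightarrow> Suc a mod length L = b \<or> Suc b mod length L = a"
proof -
  have succ: "Suc i mod length L < length L" if "i < length L" for i
    using that by (auto intro: mod_less_divisor)
  have "L ! i = L ! k \<longleftrightarrow> i = k" if "i < length L" "k < length L" for i k
    using assms(1) that by (simp add: nth_eq_iff_index_eq)
  with assms(2,3) succ show ?thesis
    unfolding cycle_edge_def by (metis (no_types, lifting))
qed

lemma induced_path_two_edges_nonadjacent:
  assumes path: "induced_path V E L" and "path_edge L x y" and "path_edge L y z" and "x \<noteq> z"
  shows "\<not> E x z"
proof -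
  have "distinct L" using path unfolding induced_path_def by blast
  obtain a b c where abc: "a < length L" "b < length L" "c < length L"
    and x: "x = L ! a" and "y = L ! b" and z: "z = L ! c"
    using assms(2,3) path_edge_in_set by (metis in_set_conv_nth)
  with assms(2-4) \<open>distinct L\<close> have "Suc a = b \<or> Suc b = a" "Suc b = c \<or> Suc c = b" "a \<noteq> c"
    by (auto simp: path_edge_nth_iff)
  then have "\<not> (Suc a = c \<or> Suc c = a)" by auto
  then show ?thesis
    using path abc unfolding induced_path_def x z by blast
qed

lemma Suc_mod_eq_iff:
  fixes i k n :: nat
  assumes "i < n" and "k < n"
  shows "Suc i mod n = k \<longleftrightarrow> Suc i = k \<or> Suc i = n \<and> k = 0"
  using assms by (auto simp: mod_Suc)

lemma hole_two_edges_nonadjacent: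
  assumes hole: "hole V E L" and "cycle_edge L x y" and "cycle_edge L y z" and "x \<noteq> z"
  shows "\<not> E x z"
proof -
  define n where "n = length L"
  have "distinct L" and "n \<ge> 4" using hole unfolding hole_def n_def by auto
  obtain a b c where abc: "a < n" "b < n" "c < n"
    and x: "x = L ! a" and "y = L ! b" and z: "z = L ! c"
    using assms(2,3) cycle_edge_in_set unfolding n_def by (metis in_set_conv_nth)
  with assms(2-4) \<open>distinct L\<close>
  have "Suc a mod n = b \<or> Suc b mod n = a" "Suc b mod n = c \<or> Suc c mod n = b" "a \<noteq> c"
    by (auto simp: cycle_edge_nth_iff n_def)
  with abc \<open>n \<ge> 4\<close> have "\<not> (Suc a mod n = c \<or> Suc c mod n = a)"
    by (simp only: Suc_mod_eq_iff) linarith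
  then show ?thesis
    using hole abc unfolding hole_def x z n_def by blast
qed

theorem corollary2:
  fixes V :: "'a set" and E :: "'a \<Rightarrow> 'a \<Rightarrow> bool" and L :: "'a list"
    and j k0 k1 k2 u :: 'a
  assumes "simple_graph V E"
    and "claw_free V E"
    and "(induced_path V E L \<and> path_edge L k0 k1 \<and> path_edge L k1 k2) \<or>
         (hole V E L \<and> cycle_edge L k0 k1 \<and> cycle_edge L k1 k2)"
    and "j \<in> V" and "j \<notin> set L"
    and "distinct [k0, k1, k2]"
    and "k0 \<in> set L" and "k1 \<in> set L" and "k2 \<in> set L"
    and "E j k0" and "E j k1" and "E j k2"
    and "u \<in> set L" and "u \<notin> {k0, k1, k2}" and "E j u"
  shows "E u k0 \<or> E u k2"
proof -
  have "k0 \<noteq> k2" using assms(6) by simp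
  with assms(3) have "\<not> E k0 k2"
    by (metis induced_path_two_edges_nonadjacent hole_two_edges_nonadjacent)
  moreover have "distinct [k0, k2, u]" using assms(6,14) by auto
  ultimately have "E k0 u \<or> E k2 u"
    using claw_free_common_neighbours_adjacent[OF assms(1,2,4,10,12,15)] by blast
  then show ?thesis using assms(1) unfolding simple_graph_def by metis
qed

end
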